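(* Let $i\geq 1$ and $n\geq 1$. Let $T(i,n)$ be the set of pairs $(L_1,L_2)$ of walks of length $n$ with steps $(1,1)$ and $(1,-1)$, where $L_1$ starts at $(0,0)$ and $L_2$ starts at $(0,2i)$, such that $L_1$ and $L_2$ share no common point before they reach a common ending point at $x=n$. Let $P(i,n)$ be the set of lattice paths of length $2n$ with steps $(1,1)$ and $(1,-1)$ starting at $(0,2i)$ that end on the $x$-axis and do not touch the $x$-axis at any earlier point (hence never go below it). Then there exists a bijection between $T(i,n)$ and $P(i,n)$. *)

theory Defs
  imports Main
begin

text \<open>A walk of length n with steps (1,1) and (1,-1) is encoded by its list of
  vertical steps, each equal to 1 or -1. Its k-th point is (k, start + sum of the
  first k steps).\<close>

definition steps_ok :: "int list \<Rightarrow> nat \<Rightarrow> bool" where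
  "steps_ok s n \<longleftrightarrow> length s = n \<and> set s \<subseteq> {1, -1}"

definition height :: "int \<Rightarrow> int list \<Rightarrow> nat \<Rightarrow> int" where
  "height y0 s k = y0 + sum_list (take k s)"

definition T_set :: "nat \<Rightarrow> nat \<Rightarrow> (int list \<times> int list) set" where
  "T_set i n = {(s1, s2). steps_ok s1 n \<and> steps_ok s2 n \<and>
      height 0 s1 n = height (2 * int i) s2 n \<and>
      (\<forall>k<n. height 0 s1 k \<noteq> height (2 * int i) s2 k)}"

definition P_set :: "nat \<Rightarrow> nat \<Rightarrow> int list set" where
  "P_set i n = {s. steps_ok s (2 * n) \<and> height (2 * int i) s (2 * n) = 0 \<and>
      (\<forall>k<2 * n. height (2 * int i) s k \<noteq> 0)}"

end

theory Submission
  imports Defs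
begin

text \<open>Interleave the steps of \<open>L\<^sub>2\<close> with the negated steps of \<open>L\<^sub>1\<close>. After \<open>2k\<close> steps
  the resulting path is at height \<open>L\<^sub>2(k) - L\<^sub>1(k)\<close>, the vertical gap between the walks.
  That gap starts at \<open>2i\<close>, is always even, changes by at most 2 per step and does not
  vanish before \<open>x = n\<close>; hence it stays at least 2 there, so the odd-indexed heights
  are positive too and the path first meets the axis at \<open>2n\<close>. Splitting a path into its
  even- and odd-indexed steps inverts the construction.\<close>

fun evens :: "'a list \<Rightarrow> 'a list" where
  "evens (x # y # zs) = x # evens zs"
| "evens _ = []"

fun odds :: "'a list \<Rightarrow> 'a list" where
  "odds (x # y # zs) = y # odds zs"
| "odds _ = []"

lemma length_evens [simp]: "length (evens xs) = length xs div 2"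
  by (induction xs rule: evens.induct) auto

lemma length_odds [simp]: "length (odds xs) = length xs div 2"
  by (induction xs rule: odds.induct) auto

lemma set_evens_subset: "set (evens xs) \<subseteq> set xs"
  by (induction xs rule: evens.induct) auto

lemma set_odds_subset: "set (odds xs) \<subseteq> set xs"
  by (induction xs rule: odds.induct) auto

lemma splice_evens_odds: "even (length xs) \<Longrightarrow> splice (evens xs) (odds xs) = xs"
  by (induction xs rule: evens.induct) auto

lemma evens_splice: "length xs = length ys \<Longrightarrow> evens (splice xs ys) = xs"
  by (induction xs ys rule: list_induct2) auto

lemma odds_splice: "length xs = length ys \<Longrightarrow> odds (splice xs ys) = ys"
  by (induction xs ys rule: list_induct2) auto

lemma set_splice [simp]: "set (splice xs ys) = set xs \<union> set ys"
  by (induction xs ys rule: splice.induct) auto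

lemma sum_list_splice [simp]:
  fixes xs ys :: "'a::comm_monoid_add list"
  shows "sum_list (splice xs ys) = sum_list xs + sum_list ys"
  by (induction xs ys rule: splice.induct) (simp_all add: ac_simps)

lemma sum_list_map_uminus [simp]:
  fixes xs :: "'a::ab_group_add list"
  shows "sum_list (map uminus xs) = - sum_list xs"
  by (induction xs) simp_all

lemma take_double_splice:
  "length xs = length ys \<Longrightarrow> take (2 * k) (splice xs ys) = splice (take k xs) (take k ys)"
proof (induction xs ys arbitrary: k rule: list_induct2)
  case (Cons x xs y ys)
  then show ?case by (cases k) auto
qed simp

lemma nth_double_splice:
  "length xs = length ys \<Longrightarrow> k < length xs \<Longrightarrow> splice xs ys ! (2 * k) = xs ! k"
proof (induction xs ys arbitrary: k rule: list_induct2)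
  case (Cons x xs y ys)
  then show ?case by (cases k) auto
qed simp

lemma height_Suc: "k < length s \<Longrightarrow> height y s (Suc k) = height y s k + s ! k"
  by (simp add: height_def take_Suc_conv_app_nth)

lemma height_double_splice:
  "length s1 = length s2 \<Longrightarrow>
   height y (splice s2 (map uminus s1)) (2 * k) = height y s2 k - height 0 s1 k"
  by (simp add: height_def take_double_splice take_map)

lemma steps_parity: "set s \<subseteq> {1, -1} \<Longrightarrow> even (sum_list s + int (length s))"
  by (induction s) auto

lemma even_height_gap:
  assumes "steps_ok s1 n" "steps_ok s2 n"
  shows "even (height (2 * int i) s2 k - height 0 s1 k)"
proof -
  have "set (take k s1) \<subseteq> {1, -1}" "set (take k s2) \<subseteq> {1, -1}"
    using assms set_take_subset by (fastforce simp: steps_ok_def)+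
  then have "even (sum_list (take k s1) + int (length (take k s1)))"
    "even (sum_list (take k s2) + int (length (take k s2)))"
    by (simp_all only: steps_parity)
  moreover have "length (take k s1) = length (take k s2)"
    using assms by (simp add: steps_ok_def)
  ultimately show ?thesis
    by (simp add: height_def)
qed

lemma even_gap_stays_positive:
  fixes d :: "nat \<Rightarrow> int"
  assumes "d 0 \<ge> 0" and "\<And>k. even (d k)" and "\<And>k. Suc k < n \<Longrightarrow> \<bar>d (Suc k) - d k\<bar> \<le> 2"
    and "\<And>k. k < n \<Longrightarrow> d k \<noteq> 0"
  shows "k < n \<Longrightarrow> d k \<ge> 2"
proof (induction k)
  case 0
  with assms(1) assms(2,4)[of 0] show ?case by fastforce
next
  case (Suc k)
  with assms(2,3,4)[of k] assms(2,4)[of "Suc k"] show ?case by fastforce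
qed

lemma splice_walks_in_P_set:
  assumes "(s1, s2) \<in> T_set i n"
  shows "splice s2 (map uminus s1) \<in> P_set i n"
proof -
  define p where "p = splice s2 (map uminus s1)"
  define d where "d k = height (2 * int i) s2 k - height 0 s1 k" for k
  from assms have ok: "steps_ok s1 n" "steps_ok s2 n"
    and meet: "d n = 0" and apart: "\<And>k. k < n \<Longrightarrow> d k \<noteq> 0"
    by (auto simp: T_set_def d_def)
  then have len: "length s1 = n" "length s2 = n"
    by (simp_all add: steps_ok_def)
  have step: "s1 ! k \<in> {1, -1} \<and> s2 ! k \<in> {1, -1}" if "k < n" for k
    using ok that unfolding steps_ok_def by (metis nth_mem subsetD)
  have gap: "d k \<ge> 2" if "k < n" for k
  proof (rule even_gap_stays_positive[OF _ _ _ apart that])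
    show "d 0 \<ge> 0" by (simp add: d_def height_def)
    show "even (d k)" for k using even_height_gap[OF ok] by (simp add: d_def)
    show "\<bar>d (Suc k) - d k\<bar> \<le> 2" if "Suc k < n" for k
      using that step[of k] by (auto simp: d_def height_Suc len)
  qed
  have at_even: "height (2 * int i) p (2 * k) = d k" for k
    using len by (simp add: p_def d_def height_double_splice)
  have at_odd: "height (2 * int i) p (Suc (2 * k)) = d k + s2 ! k" if "k < n" for k
    using that len by (simp add: p_def height_Suc at_even[symmetric] nth_double_splice)
  have "steps_ok p (2 * n)"
    using ok by (auto simp: p_def steps_ok_def)
  moreover have "height (2 * int i) p (2 * n) = 0"
    using at_even meet by simp
  moreover have "height (2 * int i) p k \<noteq> 0" if "k < 2 * n" for k
  proof (cases "even k")
    case True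
    then obtain j where "k = 2 * j" by blast
    with that at_even apart show ?thesis by simp
  next
    case False
    then obtain j where "k = Suc (2 * j)" by (metis oddE add.commute plus_1_eq_Suc)
    with that at_odd[of j] gap[of j] step[of j] show ?thesis by auto
  qed
  ultimately show ?thesis
    by (simp add: P_set_def p_def)
qed

lemma unsplice_in_T_set:
  assumes "p \<in> P_set i n"
  shows "(map uminus (odds p), evens p) \<in> T_set i n"
proof -
  from assms have ok: "steps_ok p (2 * n)" and land: "height (2 * int i) p (2 * n) = 0"
    and above: "\<And>k. k < 2 * n \<Longrightarrow> height (2 * int i) p k \<noteq> 0"
    by (auto simp: P_set_def)
  then have "length p = 2 * n" by (simp add: steps_ok_def)
  then have "p = splice (evens p) (map uminus (map uminus (odds p)))"
    by (simp add: splice_evens_odds)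
  then have at_even: "height (2 * int i) p (2 * k) =
      height (2 * int i) (evens p) k - height 0 (map uminus (odds p)) k" for k
    using \<open>length p = 2 * n\<close> height_double_splice[of "map uminus (odds p)" "evens p"] by simp
  have "steps_ok (map uminus (odds p)) n" "steps_ok (evens p) n"
    using ok set_odds_subset[of p] set_evens_subset[of p] by (auto simp: steps_ok_def)
  moreover have "height 0 (map uminus (odds p)) k \<noteq> height (2 * int i) (evens p) k"
    if "k < n" for k
    using that above[of "2 * k"] at_even[of k] by simp
  ultimately show ?thesis
    using land at_even[of n] by (simp add: T_set_def)
qed

theorem proposition4p1:
  fixes i n :: nat
  assumes "i \<ge> 1" and "n \<ge> 1"
  shows "\<exists>f. bij_betw f (T_set i n) (P_set i n)"
proof -
  let ?f = "\<lambda>(s1, s2). splice s2 (map uminus s1)"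
  let ?g = "\<lambda>p. (map uminus (odds p), evens p)"
  have "bij_betw ?f (T_set i n) (P_set i n)"
  proof (rule bij_betw_byWitness[where f' = ?g])
    show "\<forall>w\<in>T_set i n. ?g (?f w) = w"
      by (auto simp: T_set_def steps_ok_def evens_splice odds_splice comp_def)
    show "\<forall>p\<in>P_set i n. ?f (?g p) = p"
      by (auto simp: P_set_def steps_ok_def comp_def splice_evens_odds)
  qed (auto intro: splice_walks_in_P_set unsplice_in_T_set)
  then show ?thesis by blast
qed

end
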